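(* Let $E$, $(s^1,s^0)$, $M$ be as in the context. (a) For every $z\in Z^2_{\mathrm{pt}}(E,M)$: $z^{\mathrm{std}}_M([m])=0$ and $z^{\mathrm{std}}_G(g[\bar g]^{-1},[\bar g])=0$ for all $m\in M_E$, $g\in G_E$. (b) $Z^2_{\mathrm{st}}(E,M)=\{z\in Z^2_{\mathrm{pt}}(E,M): z_M([m])=0\text{ and }z_G(g[\bar g]^{-1},[\bar g])=0\ \forall m\in M_E,g\in G_E\}$; in particular $z^{\mathrm{std}}$ is standard for every $z\in Z^2_{\mathrm{pt}}(E,M)$. (c) The inclusion $Z^2_{\mathrm{st}}(E,M)\to Z^2_{\mathrm{pt}}(E,M)$ and the map $z\mapsto z^{\mathrm{std}}$ induce mutually inverse isomorphisms between $H^2_{\mathrm{st}}(E,M)$ and $H^2_{\mathrm{pt}}(E,M)$; in particular $H^2(E,M)\cong H^2_{\mathrm{st}}(E,M)$.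
   Context: Let $\Pi_0$ be a group, $\Pi_1$ an abelian $\Pi_0$-module (multiplicative), $M$ an abelian $\Pi_0$-module. A crossed module extension $E$ of $\Pi_0$ with $\Pi_1$: crossed module $(G_E,M_E,\mu)$ (left action ${}^gm$, $\mu({}^gm)=g\mu(m)g^{-1}$, ${}^{\mu(n)}m=nmn^{-1}$) with monomorphism $\iota:\Pi_1\to M_E$ and epimorphism $\pi:G_E\to\Pi_0$, $\Pi_1\to M_E\to G_E\to\Pi_0$ exact, ${}^g\iota(k)=\iota(\pi(g)k)$. $\bar g:=\pi(g)$; $M$ is a $G_E$-module via $\pi$. A section system: $s^0:\Pi_0\to G_E$, $s^0(1)=1$, $\pi s^0=\mathrm{id}$; $s^1:\mu(M_E)\to M_E$, $s^1(1)=1$, $\mu s^1=\mathrm{id}$. Notation $[p]=s^0(p)$, $[x]=s^1(x)$ for $x\in\mu(M_E)$, $[m]=s^1(\mu(m))$ for $m\in M_E$. Cochains: $C^1(E,M)=\mathrm{Map}(G_E,M)$, $C^2(E,M)=\mathrm{Map}(M_E\times G_E\times G_E,M)$; $d$ on $C^1$: $(dc)(m,h,g)=c(\mu(m)h)-c(hg)+\bar h c(g)$; on $C^2$: $(dc)(p,n,k,m,h,g)=c(p,\mu(n)k,\mu(m)h)-c(pn,k,hg)+c(n\,{}^km,kh,g)-\bar k\cdot c(m,h,g)$; $H^2(E,M)$ is the resulting cohomology. Pointed: $c(1)=0$, resp. $c(1,1,1)=0$; $Z^2_{\mathrm{pt}}$, $B^2_{\mathrm{pt}}$ the pointed cocycles/coboundaries,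 $H^2_{\mathrm{pt}}=Z^2_{\mathrm{pt}}/B^2_{\mathrm{pt}}$. $c_M(m)=c(m,1,1)$, $c_G(h,g)=c(1,h,g)$, and for $m\in M_E$, $c_G(m,h):=c_G(\mu(m),h)$. For $z\in Z^2_{\mathrm{pt}}(E,M)$: $\sigma_z(g)=z([g[\bar g]^{-1}],[\bar g],1)$, $z^{\mathrm{std}}=z-d\sigma_z$; $z$ is standard if $z^{\mathrm{std}}=z$. $Z^2_{\mathrm{st}}(E,M)$ = standard pointed cocycles, $B^2_{\mathrm{st}}(E,M)=\{b\in B^2_{\mathrm{pt}}(E,M):b^{\mathrm{std}}=b\}$, $H^2_{\mathrm{st}}=Z^2_{\mathrm{st}}/B^2_{\mathrm{st}}$. *)

theory Defs
  imports "HOL-Algebra.Coset" "HOL-Library.Function_Algebras"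
begin

(* All groups are written additively (type class group_add, which does NOT assume
   commutativity); the abelian ones (Pi_1, M) are of class ab_group_add.
   Thus g + h stands for the product gh, 0 for 1, -g for g^{-1}. *)

definition grp_hom :: "('a::group_add \<Rightarrow> 'b::group_add) \<Rightarrow> bool" where
  "grp_hom f \<longleftrightarrow> (\<forall>x y. f (x + y) = f x + f y)"

definition aut_action :: "('a::group_add \<Rightarrow> 'b::group_add \<Rightarrow> 'b) \<Rightarrow> bool" where
  "aut_action a \<longleftrightarrow> (\<forall>x. a 0 x = x) \<and> (\<forall>p q x. a (p + q) x = a p (a q x))
      \<and> (\<forall>p x y. a p (x + y) = a p x + a p y)"

definition crossed_module :: "('g::group_add \<Rightarrow> 'n::group_add \<Rightarrow> 'n) \<Rightarrow> ('n \<Rightarrow> 'g) \<Rightarrow> bool" where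
  "crossed_module act \<mu> \<longleftrightarrow> aut_action act \<and> grp_hom \<mu>
      \<and> (\<forall>g m. \<mu> (act g m) = g + \<mu> m - g)
      \<and> (\<forall>m n. act (\<mu> n) m = n + m - n)"

definition crossed_module_ext ::
  "('p0::group_add \<Rightarrow> 'p1::ab_group_add \<Rightarrow> 'p1) \<Rightarrow> ('g::group_add \<Rightarrow> 'n::group_add \<Rightarrow> 'n)
     \<Rightarrow> ('n \<Rightarrow> 'g) \<Rightarrow> ('p1 \<Rightarrow> 'n) \<Rightarrow> ('g \<Rightarrow> 'p0) \<Rightarrow> bool" where
  "crossed_module_ext aP1 act \<mu> \<iota> \<pi> \<longleftrightarrow>
      aut_action aP1 \<and> crossed_module act \<mu>
      \<and> grp_hom \<iota> \<and> inj \<iota> \<and> grp_hom \<pi> \<and> surj \<pi>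
      \<and> range \<iota> = {m. \<mu> m = 0} \<and> range \<mu> = {g. \<pi> g = 0}
      \<and> (\<forall>g k. act g (\<iota> k) = \<iota> (aP1 (\<pi> g) k))"

definition section_system ::
  "('n::group_add \<Rightarrow> 'g::group_add) \<Rightarrow> ('g \<Rightarrow> 'p0::group_add) \<Rightarrow> ('p0 \<Rightarrow> 'g) \<Rightarrow> ('g \<Rightarrow> 'n) \<Rightarrow> bool" where
  "section_system \<mu> \<pi> s0 s1 \<longleftrightarrow> s0 0 = 0 \<and> (\<forall>p. \<pi> (s0 p) = p)
      \<and> s1 0 = 0 \<and> (\<forall>x \<in> range \<mu>. \<mu> (s1 x) = x)"

(* cochains: C^1(E,M) = Map(G_E, M), C^2(E,M) = Map(M_E x G_E x G_E, M) (curried),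
   C^3 for the target of d on C^2, arguments (p,n,k,m,h,g) *)
type_synonym ('g, 'm) C1 = "'g \<Rightarrow> 'm"
type_synonym ('n, 'g, 'm) C2 = "'n \<Rightarrow> 'g \<Rightarrow> 'g \<Rightarrow> 'm"
type_synonym ('n, 'g, 'm) C3 = "'n \<Rightarrow> 'n \<Rightarrow> 'g \<Rightarrow> 'n \<Rightarrow> 'g \<Rightarrow> 'g \<Rightarrow> 'm"

(* aM : action of Pi_0 on M; M is a G_E-module via pi *)
definition d1 ::
  "('n::group_add \<Rightarrow> 'g::group_add) \<Rightarrow> ('g \<Rightarrow> 'p0) \<Rightarrow> ('p0 \<Rightarrow> 'm::ab_group_add \<Rightarrow> 'm)
     \<Rightarrow> ('g, 'm) C1 \<Rightarrow> ('n, 'g, 'm) C2" where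
  "d1 \<mu> \<pi> aM c = (\<lambda>m h g. c (\<mu> m + h) - c (h + g) + aM (\<pi> h) (c g))"

definition d2 ::
  "('g::group_add \<Rightarrow> 'n::group_add \<Rightarrow> 'n) \<Rightarrow> ('n \<Rightarrow> 'g) \<Rightarrow> ('g \<Rightarrow> 'p0) \<Rightarrow> ('p0 \<Rightarrow> 'm::ab_group_add \<Rightarrow> 'm)
     \<Rightarrow> ('n, 'g, 'm) C2 \<Rightarrow> ('n, 'g, 'm) C3" where
  "d2 act \<mu> \<pi> aM c = (\<lambda>p n k m h g.
      c p (\<mu> n + k) (\<mu> m + h) - c (p + n) k (h + g) + c (n + act k m) (k + h) g
      - aM (\<pi> k) (c m h g))"

definition Z2 where "Z2 act \<mu> \<pi> aM = {c. d2 act \<mu> \<pi> aM c = 0}"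
definition B2 where "B2 \<mu> \<pi> aM = range (d1 \<mu> \<pi> aM)"

definition pointed2 :: "('n::group_add, 'g::group_add, 'm::ab_group_add) C2 \<Rightarrow> bool" where
  "pointed2 c \<longleftrightarrow> c 0 0 0 = 0"

definition Z2pt where "Z2pt act \<mu> \<pi> aM = {z \<in> Z2 act \<mu> \<pi> aM. pointed2 z}"
definition B2pt where "B2pt \<mu> \<pi> aM = {b \<in> B2 \<mu> \<pi> aM. pointed2 b}"

definition cM :: "('n::group_add, 'g::group_add, 'm::ab_group_add) C2 \<Rightarrow> 'n \<Rightarrow> 'm" where
  "cM c m = c m 0 0"
definition cG :: "('n::group_add, 'g::group_add, 'm::ab_group_add) C2 \<Rightarrow> 'g \<Rightarrow> 'g \<Rightarrow> 'm" where
  "cG c h g = c 0 h g"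

(* sigma_z(g) = z([g [gbar]^{-1}], [gbar], 1) *)
definition sigma ::
  "('g::group_add \<Rightarrow> 'p0::group_add) \<Rightarrow> ('p0 \<Rightarrow> 'g) \<Rightarrow> ('g \<Rightarrow> 'n::group_add)
     \<Rightarrow> ('n, 'g, 'm::ab_group_add) C2 \<Rightarrow> ('g, 'm) C1" where
  "sigma \<pi> s0 s1 z = (\<lambda>g. z (s1 (g - s0 (\<pi> g))) (s0 (\<pi> g)) 0)"

definition std where
  "std \<mu> \<pi> aM s0 s1 z = z - d1 \<mu> \<pi> aM (sigma \<pi> s0 s1 z)"

definition Z2st where
  "Z2st act \<mu> \<pi> aM s0 s1 = {z \<in> Z2pt act \<mu> \<pi> aM. std \<mu> \<pi> aM s0 s1 z = z}"
definition B2st where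
  "B2st \<mu> \<pi> aM s0 s1 = {b \<in> B2pt \<mu> \<pi> aM. std \<mu> \<pi> aM s0 s1 b = b}"

definition add_grp :: "'a::ab_group_add set \<Rightarrow> 'a monoid" where
  "add_grp S = \<lparr>carrier = S, mult = (+), one = 0\<rparr>"

definition H2 where "H2 act \<mu> \<pi> aM = add_grp (Z2 act \<mu> \<pi> aM) Mod B2 \<mu> \<pi> aM"
definition H2pt where "H2pt act \<mu> \<pi> aM = add_grp (Z2pt act \<mu> \<pi> aM) Mod B2pt \<mu> \<pi> aM"
definition H2st where
  "H2st act \<mu> \<pi> aM s0 s1 = add_grp (Z2st act \<mu> \<pi> aM s0 s1) Mod B2st \<mu> \<pi> aM s0 s1"

end

theory Submission
  imports Defs
begin

(* For a pointed 2-cocycle z, specialising the cocycle identity shows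
     sigma_z(g) = z_M([g [gbar]^{-1}]) - z_G(g [gbar]^{-1}, [gbar])        (sigma_formula),
   and part (a) is a direct computation from this formula.  A pointed cocycle is standard
   iff sigma_z = 0, which by the same formula is exactly the vanishing condition of (b).
   For (c), z |-> z^std = z - d sigma_z is additive, maps pointed coboundaries onto standard
   ones and detects coboundaries, hence induces an isomorphism H^2_pt -> H^2_st; its inverse
   is induced by the inclusion.  Likewise the normalisation z |-> z - d(const z(1,1,1))
   induces H^2 = H^2_pt, and composing gives H^2 = H^2_st. *)

lemma grp_hom_zero: "grp_hom (f::'a::group_add \<Rightarrow> 'b::group_add) \<Longrightarrow> f 0 = 0"
  unfolding grp_hom_def by (metis add.right_neutral add_left_cancel)

lemma grp_hom_diff: "grp_hom (f::'a::group_add \<Rightarrow> 'b::group_add) \<Longrightarrow> f (x - y) = f x - f y"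
  unfolding grp_hom_def by (metis add_diff_cancel diff_add_cancel)

lemma grp_hom_uminus: "grp_hom (f::'a::group_add \<Rightarrow> 'b::group_add) \<Longrightarrow> f (- x) = - f x"
  using grp_hom_diff[of f 0 x] grp_hom_zero[of f] by simp

definition additive_subgroup :: "'a::ab_group_add set \<Rightarrow> bool" where
  "additive_subgroup B \<longleftrightarrow> 0 \<in> B \<and> (\<forall>x\<in>B. \<forall>y\<in>B. x + y \<in> B) \<and> (\<forall>x\<in>B. - x \<in> B)"

lemma additive_subgroup_diff:
  "additive_subgroup B \<Longrightarrow> x \<in> B \<Longrightarrow> y \<in> B \<Longrightarrow> x - y \<in> B"
  unfolding additive_subgroup_def by (metis diff_conv_add_uminus)

lemma additive_subgroup_Int:
  "additive_subgroup A \<Longrightarrow> additive_subgroup B \<Longrightarrow> additive_subgroup (A \<inter> B)"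
  unfolding additive_subgroup_def by blast

lemma additive_subgroup_kernel:
  fixes f :: "'a::ab_group_add \<Rightarrow> 'b::ab_group_add"
  assumes "grp_hom f"
  shows "additive_subgroup {x. f x = 0}"
  using assms grp_hom_zero[OF assms] grp_hom_uminus[OF assms]
  unfolding additive_subgroup_def grp_hom_def by auto

lemma additive_subgroup_range:
  fixes f :: "'a::ab_group_add \<Rightarrow> 'b::ab_group_add"
  assumes f: "grp_hom f"
  shows "additive_subgroup (range f)"
  unfolding additive_subgroup_def
proof (intro conjI ballI)
  show "0 \<in> range f" using grp_hom_zero[OF f] by (metis rangeI)
next
  fix x y assume "x \<in> range f" "y \<in> range f"
  then obtain a b where "x = f a" "y = f b" by blast
  then have "x + y = f (a + b)" using f by (simp add: grp_hom_def)
  then show "x + y \<in> range f" by simp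
next
  fix x assume "x \<in> range f"
  then obtain a where "x = f a" by blast
  then have "- x = f (- a)" using grp_hom_uminus[OF f] by simp
  then show "- x \<in> range f" by simp
qed

lemma r_coset_add_grp: "r_coset (add_grp Z) B a = (\<lambda>b. b + a) ` B"
  unfolding r_coset_def add_grp_def by auto

lemma carrier_add_grp_Mod: "carrier (add_grp Z Mod B) = {(\<lambda>b. b + a) ` B | a. a \<in> Z}"
  unfolding FactGroup_def RCOSETS_def r_coset_add_grp by (auto simp: add_grp_def)

lemma set_mult_add_grp: "X <#>\<^bsub>add_grp Z\<^esub> Y = {x + y | x y. x \<in> X \<and> y \<in> Y}"
  unfolding set_mult_def add_grp_def by auto

lemma r_coset_in_carrier: "a \<in> Z \<Longrightarrow> r_coset (add_grp Z) B a \<in> carrier (add_grp Z Mod B)"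
  unfolding carrier_add_grp_Mod r_coset_add_grp by blast

lemma coset_eq_iff:
  assumes B: "additive_subgroup B"
  shows "(\<lambda>b. b + a) ` B = (\<lambda>b. b + c) ` B \<longleftrightarrow> a - c \<in> B"
proof
  assume eq: "(\<lambda>b. b + a) ` B = (\<lambda>b. b + c) ` B"
  have "0 + a \<in> (\<lambda>b. b + a) ` B" using B unfolding additive_subgroup_def by blast
  then obtain b where "b \<in> B" "a = b + c" using eq by auto
  then show "a - c \<in> B" by simp
next
  assume d: "a - c \<in> B"
  have shift: "(\<lambda>b. b + x) ` B \<subseteq> (\<lambda>b. b + y) ` B" if "x - y \<in> B" for x y
  proof
    fix u assume "u \<in> (\<lambda>b. b + x) ` B"
    then obtain b where b: "b \<in> B" "u = b + x" by auto
    have "b + (x - y) \<in> B" using b that B unfolding additive_subgroup_def by blast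
    moreover have "u = b + (x - y) + y" using b by simp
    ultimately show "u \<in> (\<lambda>b. b + y) ` B" by blast
  qed
  have "c - a \<in> B" using d B unfolding additive_subgroup_def by (metis minus_diff_eq)
  then show "(\<lambda>b. b + a) ` B = (\<lambda>b. b + c) ` B" using shift d by blast
qed

lemma comm_group_add_grp:
  assumes "additive_subgroup Z"
  shows "comm_group (add_grp Z)"
proof (rule comm_groupI)
  fix x assume "x \<in> carrier (add_grp Z)"
  then show "\<exists>y \<in> carrier (add_grp Z). y \<otimes>\<^bsub>add_grp Z\<^esub> x = \<one>\<^bsub>add_grp Z\<^esub>"
    using assms by (intro bexI[of _ "- x"]) (auto simp: add_grp_def additive_subgroup_def)
qed (use assms in \<open>auto simp: add_grp_def additive_subgroup_def add.assoc add.commute\<close>)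

lemma inv_add_grp:
  assumes "additive_subgroup Z" "x \<in> Z"
  shows "inv\<^bsub>add_grp Z\<^esub> x = - x"
proof -
  interpret group "add_grp Z" using comm_group_add_grp[OF assms(1)] comm_group.axioms(2) by blast
  show ?thesis
    using assms by (intro inv_equality) (auto simp: add_grp_def additive_subgroup_def)
qed

lemma group_add_grp_Mod:
  assumes Z: "additive_subgroup Z" and B: "additive_subgroup B" "B \<subseteq> Z"
  shows "group (add_grp Z Mod B)"
proof -
  interpret comm_group "add_grp Z" by (rule comm_group_add_grp[OF Z])
  have "subgroup B (add_grp Z)"
  proof (rule subgroupI)
    show "\<And>a. a \<in> B \<Longrightarrow> inv\<^bsub>add_grp Z\<^esub> a \<in> B"
      using B inv_add_grp[OF Z] by (auto simp: additive_subgroup_def)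
  qed (use B in \<open>auto simp: add_grp_def additive_subgroup_def\<close>)
  then show ?thesis by (intro normal.factorgroup_is_group subgroup_imp_normal)
qed

lemma image_coset:
  assumes "grp_hom f"
  shows "f ` r_coset (add_grp Z) B a = r_coset (add_grp Z') (f ` B) (f a)"
  using assms unfolding r_coset_add_grp grp_hom_def by (auto simp: image_image)

lemma induced_iso:
  fixes f :: "'a::ab_group_add \<Rightarrow> 'b::ab_group_add"
  assumes Z: "additive_subgroup Z" and B: "additive_subgroup B" and B': "additive_subgroup B'"
    and f: "grp_hom f" and fZ: "f ` Z \<subseteq> Z'" and fB: "f ` B = B'"
    and detects: "\<And>z. z \<in> Z \<Longrightarrow> f z \<in> B' \<Longrightarrow> z \<in> B"
    and onto: "\<And>z'. z' \<in> Z' \<Longrightarrow> \<exists>z\<in>Z. z' - f z \<in> B'"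
  shows "(\<lambda>X. f ` X) \<in> iso (add_grp Z Mod B) (add_grp Z' Mod B')"
proof -
  have img: "f ` ((\<lambda>b. b + a) ` B) = (\<lambda>b. b + f a) ` B'" for a
    using image_coset[OF f, of Z B a Z'] by (simp add: fB r_coset_add_grp)
  have hom: "(\<lambda>X. f ` X) \<in> hom (add_grp Z Mod B) (add_grp Z' Mod B')"
  proof (rule homI)
    fix X assume "X \<in> carrier (add_grp Z Mod B)"
    then obtain a where "a \<in> Z" "X = (\<lambda>b. b + a) ` B" by (auto simp: carrier_add_grp_Mod)
    then show "f ` X \<in> carrier (add_grp Z' Mod B')"
      using img fZ unfolding carrier_add_grp_Mod by blast
  next
    fix X Y
    have "f ` {x + y | x y. x \<in> X \<and> y \<in> Y} = {x + y | x y. x \<in> f ` X \<and> y \<in> f ` Y}"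
      using f unfolding grp_hom_def by (auto intro!: image_eqI)
    then show "f ` (X \<otimes>\<^bsub>add_grp Z Mod B\<^esub> Y) = f ` X \<otimes>\<^bsub>add_grp Z' Mod B'\<^esub> f ` Y"
      by (simp add: set_mult_add_grp)
  qed
  have inj: "inj_on (\<lambda>X. f ` X) (carrier (add_grp Z Mod B))"
  proof (rule inj_onI)
    fix X Y assume "X \<in> carrier (add_grp Z Mod B)" "Y \<in> carrier (add_grp Z Mod B)"
      and eq: "f ` X = f ` Y"
    then obtain a c where a: "a \<in> Z" "X = (\<lambda>b. b + a) ` B" and c: "c \<in> Z" "Y = (\<lambda>b. b + c) ` B"
      by (auto simp: carrier_add_grp_Mod)
    have "f a - f c \<in> B'" using eq a c img coset_eq_iff[OF B'] by simp
    then have "a - c \<in> B" using detects additive_subgroup_diff[OF Z a(1) c(1)]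
      by (simp add: grp_hom_diff[OF f])
    then show "X = Y" using a c coset_eq_iff[OF B] by simp
  qed
  have "carrier (add_grp Z' Mod B') \<subseteq> (\<lambda>X. f ` X) ` carrier (add_grp Z Mod B)"
  proof
    fix Y assume "Y \<in> carrier (add_grp Z' Mod B')"
    then obtain a' where a': "a' \<in> Z'" "Y = (\<lambda>b. b + a') ` B'" by (auto simp: carrier_add_grp_Mod)
    then obtain z where z: "z \<in> Z" "a' - f z \<in> B'" using onto by blast
    then have "Y = f ` ((\<lambda>b. b + z) ` B)" using a' img coset_eq_iff[OF B'] by simp
    moreover have "(\<lambda>b. b + z) ` B \<in> carrier (add_grp Z Mod B)"
      using z by (auto simp: carrier_add_grp_Mod)
    ultimately show "Y \<in> (\<lambda>X. f ` X) ` carrier (add_grp Z Mod B)" by blast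
  qed
  then have "bij_betw (\<lambda>X. f ` X) (carrier (add_grp Z Mod B)) (carrier (add_grp Z' Mod B'))"
    using inj hom unfolding bij_betw_def hom_def by blast
  then show ?thesis using hom by (simp add: iso_def)
qed

lemma iso_inverse:
  assumes "group G" and h: "h \<in> iso G H"
  shows "inv_into (carrier G) h \<in> iso H G"
    and "\<forall>X \<in> carrier H. h (inv_into (carrier G) h X) = X"
    and "\<forall>Y \<in> carrier G. inv_into (carrier G) h (h Y) = Y"
proof -
  have bij: "bij_betw h (carrier G) (carrier H)" using h by (simp add: iso_def)
  show "inv_into (carrier G) h \<in> iso H G" by (rule group.iso_set_sym[OF assms])
  show "\<forall>X \<in> carrier H. h (inv_into (carrier G) h X) = X"
    using bij by (simp add: bij_betw_inv_into_right)
  show "\<forall>Y \<in> carrier G. inv_into (carrier G) h (h Y) = Y"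
    using bij by (simp add: bij_betw_inv_into_left)
qed

locale crossed_module_with_sections =
  fixes act :: "'g::group_add \<Rightarrow> 'n::group_add \<Rightarrow> 'n" and \<mu> :: "'n \<Rightarrow> 'g"
    and \<pi> :: "'g \<Rightarrow> 'p0::group_add" and aM :: "'p0 \<Rightarrow> 'm::ab_group_add \<Rightarrow> 'm"
    and s0 :: "'p0 \<Rightarrow> 'g" and s1 :: "'g \<Rightarrow> 'n"
  assumes crossed: "crossed_module act \<mu>"
    and pi_hom: "grp_hom \<pi>"
    and exact: "range \<mu> = {g. \<pi> g = 0}"
    and module: "aut_action aM"
    and sections: "section_system \<mu> \<pi> s0 s1"
begin

abbreviation "D1 \<equiv> d1 \<mu> \<pi> aM"
abbreviation "D2 \<equiv> d2 act \<mu> \<pi> aM"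
abbreviation "\<sigma> \<equiv> sigma \<pi> s0 s1"
abbreviation "st \<equiv> std \<mu> \<pi> aM s0 s1"
abbreviation "Z \<equiv> Z2 act \<mu> \<pi> aM"
abbreviation "B \<equiv> B2 \<mu> \<pi> aM"
abbreviation "Zpt \<equiv> Z2pt act \<mu> \<pi> aM"
abbreviation "Bpt \<equiv> B2pt \<mu> \<pi> aM"
abbreviation "Zst \<equiv> Z2st act \<mu> \<pi> aM s0 s1"
abbreviation "Bst \<equiv> B2st \<mu> \<pi> aM s0 s1"

lemma mu_add [simp]: "\<mu> (x + y) = \<mu> x + \<mu> y"
  using crossed unfolding crossed_module_def grp_hom_def by blast

lemma mu_zero [simp]: "\<mu> 0 = 0"
  using crossed grp_hom_zero unfolding crossed_module_def by blast

lemma pi_add [simp]: "\<pi> (x + y) = \<pi> x + \<pi> y"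
  using pi_hom unfolding grp_hom_def by blast

lemma mu_act: "\<mu> (act g m) = g + \<mu> m - g"
  using crossed unfolding crossed_module_def by blast

lemma pi_zero [simp]: "\<pi> 0 = 0" and pi_diff [simp]: "\<pi> (x - y) = \<pi> x - \<pi> y"
  using grp_hom_zero[OF pi_hom] grp_hom_diff[OF pi_hom] by auto

lemma pi_mu [simp]: "\<pi> (\<mu> n) = 0"
  using exact by blast

lemma aM_zero [simp]: "aM 0 x = x"
  and aM_comp: "aM (p + q) x = aM p (aM q x)"
  and aM_add [simp]: "aM p (x + y) = aM p x + aM p y"
  using module unfolding aut_action_def by auto

lemma aM_on_zero [simp]: "aM p 0 = 0"
  using aM_add[of p 0 0] by simp

lemma aM_diff [simp]: "aM p (x - y) = aM p x - aM p y"
  using aM_add[of p "x - y" y] by (simp add: algebra_simps)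

lemma s0_zero [simp]: "s0 0 = 0" and pi_s0 [simp]: "\<pi> (s0 p) = p" and s1_zero [simp]: "s1 0 = 0"
  using sections unfolding section_system_def by auto

lemma act_on_zero [simp]: "act g 0 = 0"
proof -
  have "act g 0 + act g 0 = act g 0 + 0"
    using crossed unfolding crossed_module_def aut_action_def by (metis add.right_neutral)
  then show ?thesis by (rule add_left_imp_eq)
qed

lemma mu_s1: "\<pi> g = 0 \<Longrightarrow> \<mu> (s1 g) = g"
  using sections exact unfolding section_system_def by blast

lemma d1_hom: "grp_hom D1"
  by (simp add: grp_hom_def d1_def fun_eq_iff algebra_simps)

lemma d2_hom: "grp_hom D2"
  by (simp add: grp_hom_def d2_def fun_eq_iff algebra_simps)

lemma d2_d1: "D2 (D1 c) = 0"
proof -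
  have shift: "a - k + (k + h) = a + h" for a k h :: 'g
    by (metis add.assoc diff_add_cancel)
  show ?thesis
    by (simp add: d2_def d1_def fun_eq_iff mu_act aM_comp add.assoc shift)
qed

lemma sigma_hom: "grp_hom \<sigma>"
  by (simp add: grp_hom_def sigma_def fun_eq_iff)

lemma std_hom: "grp_hom st"
proof -
  have "D1 (\<sigma> (x + y)) = D1 (\<sigma> x) + D1 (\<sigma> y)" for x y
    using d1_hom sigma_hom unfolding grp_hom_def by metis
  then show ?thesis by (simp add: grp_hom_def std_def algebra_simps)
qed

lemma std_apply: "st z m h g = z m h g - \<sigma> z (\<mu> m + h) + \<sigma> z (h + g) - aM (\<pi> h) (\<sigma> z g)"
  by (simp add: std_def d1_def)

lemma cocycle_identity:
  assumes "z \<in> Z"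
  shows "z p (\<mu> n + k) (\<mu> m + h) - z (p + n) k (h + g) + z (n + act k m) (k + h) g
          = aM (\<pi> k) (z m h g)"
proof -
  have "D2 z p n k m h g = 0" using assms by (simp add: Z2_def)
  then show ?thesis by (simp add: d2_def)
qed

lemma pointed_cocycle_vanishes:
  assumes z: "z \<in> Zpt"
  shows "z 0 h 0 = 0"
proof -
  have "z \<in> Z" "z 0 0 0 = 0" using z by (auto simp: Z2pt_def pointed2_def)
  then show ?thesis using cocycle_identity[of z 0 0 h 0 0 0] by simp
qed

lemma pointed_cocycle_shift:
  assumes z: "z \<in> Zpt"
  shows "cG z (\<mu> n) s = cM z n - z n s 0"
proof -
  have "z \<in> Z" using z by (simp add: Z2pt_def)
  then have "z n 0 s = z n 0 0" and "z 0 (\<mu> n) s - z n 0 s + z n s 0 = z 0 s 0"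
    using cocycle_identity[of z n 0 0 0 0 s] cocycle_identity[of z 0 n 0 0 s 0] by simp_all
  then show ?thesis using pointed_cocycle_vanishes[OF z] by (simp add: cG_def cM_def algebra_simps)
qed

lemma sigma_on_kernel: "\<pi> x = 0 \<Longrightarrow> \<sigma> z x = cM z (s1 x)"
  by (simp add: sigma_def cM_def)

lemma sigma_on_section: "z \<in> Zpt \<Longrightarrow> \<sigma> z (s0 p) = 0"
  by (simp add: sigma_def pointed_cocycle_vanishes)

lemma sigma_formula:
  assumes z: "z \<in> Zpt"
  shows "\<sigma> z g = cM z (s1 (g - s0 (\<pi> g))) - cG z (g - s0 (\<pi> g)) (s0 (\<pi> g))"
proof -
  let ?g' = "g - s0 (\<pi> g)"
  have "\<mu> (s1 ?g') = ?g'" by (rule mu_s1) simp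
  then show ?thesis
    using pointed_cocycle_shift[OF z, of "s1 ?g'" "s0 (\<pi> g)"] by (simp add: sigma_def)
qed

lemma std_M_vanishes: "cM (st z) (s1 (\<mu> m)) = 0"
  by (simp add: cM_def std_apply sigma_on_kernel mu_s1)

lemma std_G_vanishes:
  assumes z: "z \<in> Zpt"
  shows "cG (st z) (g - s0 (\<pi> g)) (s0 (\<pi> g)) = 0"
proof -
  let ?g' = "g - s0 (\<pi> g)" and ?s = "s0 (\<pi> g)"
  have "cG (st z) ?g' ?s = cG z ?g' ?s - \<sigma> z ?g' + \<sigma> z g"
    by (simp add: cG_def std_apply sigma_on_section[OF z])
  also have "\<dots> = 0"
    using sigma_on_kernel[of ?g' z] sigma_formula[OF z, of g] by simp
  finally show ?thesis .
qed

lemma D1_in_Z: "D1 c \<in> Z"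
  by (simp add: Z2_def d2_d1)

lemma std_in_Zpt:
  assumes z: "z \<in> Zpt"
  shows "st z \<in> Zpt"
proof -
  have "D2 (st z) = D2 z - D2 (D1 (\<sigma> z))" by (simp add: std_def grp_hom_diff[OF d2_hom])
  then have "st z \<in> Z" using z by (simp add: Z2_def Z2pt_def d2_d1)
  moreover have "st z 0 0 0 = 0" using z by (simp add: std_apply sigma_def Z2pt_def pointed2_def)
  ultimately show ?thesis by (simp add: Z2pt_def pointed2_def)
qed

(* Part (b): a pointed cocycle is standard iff z_M([m]) and z_G(g[gbar]^{-1}, [gbar]) vanish,
   because by sigma_formula these conditions say exactly that sigma_z = 0. *)
lemma Z2st_characterisation:
  "Zst = {z \<in> Zpt. (\<forall>m. cM z (s1 (\<mu> m)) = 0)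
                   \<and> (\<forall>g. cG z (g - s0 (\<pi> g)) (s0 (\<pi> g)) = 0)}"
proof (intro Set.set_eqI iffI)
  fix z assume "z \<in> Zst"
  then have "z \<in> Zpt" and "st z = z" by (auto simp: Z2st_def)
  then show "z \<in> {z \<in> Zpt. (\<forall>m. cM z (s1 (\<mu> m)) = 0)
                             \<and> (\<forall>g. cG z (g - s0 (\<pi> g)) (s0 (\<pi> g)) = 0)}"
    using std_M_vanishes[of z] std_G_vanishes[of z] by simp
next
  fix z assume "z \<in> {z \<in> Zpt. (\<forall>m. cM z (s1 (\<mu> m)) = 0)
                             \<and> (\<forall>g. cG z (g - s0 (\<pi> g)) (s0 (\<pi> g)) = 0)}"
  then have z: "z \<in> Zpt" and M: "\<And>m. cM z (s1 (\<mu> m)) = 0"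
    and G: "\<And>g. cG z (g - s0 (\<pi> g)) (s0 (\<pi> g)) = 0" by auto
  have "\<sigma> z g = 0" for g
  proof -
    have "\<mu> (s1 (g - s0 (\<pi> g))) = g - s0 (\<pi> g)" by (rule mu_s1) simp
    then have "cM z (s1 (g - s0 (\<pi> g))) = 0" using M by metis
    then show ?thesis using sigma_formula[OF z, of g] G[of g] by simp
  qed
  then have "st z = z" by (simp add: std_def fun_eq_iff d1_def)
  then show "z \<in> Zst" using z by (simp add: Z2st_def)
qed

lemma std_in_Zst: "z \<in> Zpt \<Longrightarrow> st z \<in> Zst"
  unfolding Z2st_characterisation
  using std_in_Zpt std_M_vanishes std_G_vanishes by blast

lemma pointed_subgroup: "additive_subgroup {z :: ('n, 'g, 'm) C2. pointed2 z}"
proof -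
  have "grp_hom (\<lambda>z :: ('n, 'g, 'm) C2. z 0 0 0)" by (simp add: grp_hom_def)
  then show ?thesis using additive_subgroup_kernel by (simp add: pointed2_def)
qed

lemma Z_subgroup: "additive_subgroup Z"
  unfolding Z2_def using additive_subgroup_kernel[OF d2_hom] by simp

lemma B_subgroup: "additive_subgroup B"
  unfolding B2_def by (rule additive_subgroup_range[OF d1_hom])

lemma Zpt_subgroup: "additive_subgroup Zpt"
proof -
  have "Zpt = Z \<inter> {z. pointed2 z}" by (auto simp: Z2pt_def)
  then show ?thesis using additive_subgroup_Int[OF Z_subgroup pointed_subgroup] by simp
qed

lemma Bpt_subgroup: "additive_subgroup Bpt"
proof -
  have "Bpt = B \<inter> {z. pointed2 z}" by (auto simp: B2pt_def)
  then show ?thesis using additive_subgroup_Int[OF B_subgroup pointed_subgroup] by simp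
qed

lemma Bst_subgroup: "additive_subgroup Bst"
proof -
  have "grp_hom (\<lambda>z. st z - z)" using std_hom by (simp add: grp_hom_def algebra_simps)
  then have "additive_subgroup (Bpt \<inter> {z. st z - z = 0})"
    by (rule additive_subgroup_Int[OF Bpt_subgroup additive_subgroup_kernel])
  moreover have "Bst = Bpt \<inter> {z. st z - z = 0}" by (auto simp: B2st_def)
  ultimately show ?thesis by simp
qed

lemma Bpt_subset_Zpt: "Bpt \<subseteq> Zpt"
  by (auto simp: B2pt_def Z2pt_def B2_def D1_in_Z)

lemma std_image_Bpt: "st ` Bpt = Bst"
proof
  show "st ` Bpt \<subseteq> Bst"
  proof
    fix b' assume "b' \<in> st ` Bpt"
    then obtain b where b: "b \<in> Bpt" "b' = st b" by blast
    then obtain c where c: "b = D1 c" by (auto simp: B2pt_def B2_def)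
    have "st b = D1 (c - \<sigma> b)" by (simp add: std_def c grp_hom_diff[OF d1_hom])
    moreover have "st b \<in> Zst" using b Bpt_subset_Zpt std_in_Zst by blast
    ultimately show "b' \<in> Bst" using b by (simp add: B2st_def B2pt_def Z2st_def Z2pt_def B2_def)
  qed
  show "Bst \<subseteq> st ` Bpt" unfolding B2st_def by (auto intro: image_eqI[OF sym])
qed

lemma std_detects_coboundaries:
  assumes z: "z \<in> Zpt" and st: "st z \<in> Bst"
  shows "z \<in> Bpt"
proof -
  obtain c where c: "st z = D1 c" using st by (auto simp: B2st_def B2pt_def B2_def)
  have "z = st z + D1 (\<sigma> z)" by (simp add: std_def)
  also have "\<dots> = D1 (c + \<sigma> z)" using d1_hom by (simp add: c grp_hom_def)
  finally show ?thesis using z by (simp add: B2pt_def B2_def Z2pt_def)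
qed

lemma std_iso: "(\<lambda>X. st ` X) \<in> iso (H2pt act \<mu> \<pi> aM) (H2st act \<mu> \<pi> aM s0 s1)"
  unfolding H2pt_def H2st_def
proof (rule induced_iso[OF Zpt_subgroup Bpt_subgroup Bst_subgroup std_hom _ std_image_Bpt])
  show "st ` Zpt \<subseteq> Zst" using std_in_Zst by blast
  show "\<And>z. z \<in> Zpt \<Longrightarrow> st z \<in> Bst \<Longrightarrow> z \<in> Bpt" by (rule std_detects_coboundaries)
  fix z' assume "z' \<in> Zst"
  then have "z' \<in> Zpt" "z' - st z' = 0" by (auto simp: Z2st_def)
  moreover have "0 \<in> Bst" using Bst_subgroup by (simp add: additive_subgroup_def)
  ultimately show "\<exists>z\<in>Zpt. z' - st z \<in> Bst" by metis
qed

lemma std_iso_coset: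
  "st ` r_coset (add_grp Zpt) Bpt z = r_coset (add_grp Zst) Bst (st z)"
  using image_coset[OF std_hom, of Zpt Bpt z Zst] by (simp add: std_image_Bpt)

lemma inclusion_iso_coset:
  assumes z: "z \<in> Zst"
  shows "inv_into (carrier (H2pt act \<mu> \<pi> aM)) (\<lambda>X. st ` X) (r_coset (add_grp Zst) Bst z)
           = r_coset (add_grp Zpt) Bpt z"
proof -
  have "z \<in> Zpt" "st z = z" using z by (auto simp: Z2st_def)
  then have "r_coset (add_grp Zst) Bst z = st ` r_coset (add_grp Zpt) Bpt z"
    using std_iso_coset[of z] by simp
  moreover have "inj_on (\<lambda>X. st ` X) (carrier (H2pt act \<mu> \<pi> aM))"
    using std_iso by (simp add: iso_def bij_betw_def)
  ultimately show ?thesis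
    using inv_into_f_f r_coset_in_carrier[OF \<open>z \<in> Zpt\<close>, of Bpt] by (simp add: H2pt_def)
qed

lemma H2pt_group: "group (H2pt act \<mu> \<pi> aM)"
  unfolding H2pt_def by (rule group_add_grp_Mod[OF Zpt_subgroup Bpt_subgroup Bpt_subset_Zpt])

definition pointify :: "('n, 'g, 'm) C2 \<Rightarrow> ('n, 'g, 'm) C2" where
  "pointify z = z - D1 (\<lambda>_. z 0 0 0)"

lemma pointify_hom: "grp_hom pointify"
  unfolding grp_hom_def
proof (intro allI)
  fix z w :: "('n, 'g, 'm) C2"
  have "D1 (\<lambda>_. (z + w) 0 0 0) = D1 ((\<lambda>_. z 0 0 0) + (\<lambda>_. w 0 0 0))"
    by (simp add: plus_fun_def)
  also have "\<dots> = D1 (\<lambda>_. z 0 0 0) + D1 (\<lambda>_. w 0 0 0)"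
    using d1_hom unfolding grp_hom_def by blast
  finally show "pointify (z + w) = pointify z + pointify w"
    by (simp add: pointify_def algebra_simps)
qed

lemma pointify_pointed: "pointed2 (pointify z)"
  by (simp add: pointify_def pointed2_def d1_def)

lemma pointify_fixes_pointed: "pointed2 z \<Longrightarrow> pointify z = z"
  by (simp add: pointify_def pointed2_def d1_def fun_eq_iff)

lemma pointify_Z:
  assumes "z \<in> Z"
  shows "pointify z \<in> Zpt"
proof -
  have "D2 (pointify z) = D2 z - D2 (D1 (\<lambda>_. z 0 0 0))"
    unfolding pointify_def by (rule grp_hom_diff[OF d2_hom])
  then have "pointify z \<in> Z" using assms by (simp add: Z2_def d2_d1)
  then show ?thesis using pointify_pointed by (simp add: Z2pt_def)
qed

lemma pointify_image_B: "pointify ` B = Bpt"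
proof
  show "pointify ` B \<subseteq> Bpt"
  proof
    fix b' assume "b' \<in> pointify ` B"
    then obtain c where b': "b' = pointify (D1 c)" by (auto simp: B2_def)
    then have "b' = D1 (c - (\<lambda>_. D1 c 0 0 0))" by (simp add: pointify_def grp_hom_diff[OF d1_hom])
    moreover have "pointed2 b'" using b' pointify_pointed by simp
    ultimately show "b' \<in> Bpt" by (auto simp: B2pt_def B2_def)
  qed
  show "Bpt \<subseteq> pointify ` B"
  proof
    fix b assume "b \<in> Bpt"
    then have "b \<in> B" "pointify b = b" by (auto simp: B2pt_def pointify_fixes_pointed)
    then show "b \<in> pointify ` B" by (metis imageI)
  qed
qed

lemma pointify_detects_coboundaries:
  assumes "pointify z \<in> Bpt"
  shows "z \<in> B"
proof -
  obtain c where c: "pointify z = D1 c" using assms by (auto simp: B2pt_def B2_def)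
  have "z = pointify z + D1 (\<lambda>_. z 0 0 0)" by (simp add: pointify_def)
  also have "\<dots> = D1 (c + (\<lambda>_. z 0 0 0))" using d1_hom by (simp add: c grp_hom_def)
  finally show ?thesis by (simp add: B2_def)
qed

lemma pointify_iso: "(\<lambda>X. pointify ` X) \<in> iso (H2 act \<mu> \<pi> aM) (H2pt act \<mu> \<pi> aM)"
  unfolding H2_def H2pt_def
proof (rule induced_iso[OF Z_subgroup B_subgroup Bpt_subgroup pointify_hom _ pointify_image_B])
  show "pointify ` Z \<subseteq> Zpt" using pointify_Z by blast
  show "\<And>z. z \<in> Z \<Longrightarrow> pointify z \<in> Bpt \<Longrightarrow> z \<in> B" by (rule pointify_detects_coboundaries)
  fix z' assume "z' \<in> Zpt"
  then have "z' \<in> Z" "z' - pointify z' = 0" by (auto simp: Z2pt_def pointify_fixes_pointed)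
  moreover have "0 \<in> Bpt" using Bpt_subgroup by (simp add: additive_subgroup_def)
  ultimately show "\<exists>z\<in>Z. z' - pointify z \<in> Bpt" by metis
qed


lemma H2pt_H2st_inverse_isos:
  "\<exists>\<phi> \<psi>. \<phi> \<in> iso (H2st act \<mu> \<pi> aM s0 s1) (H2pt act \<mu> \<pi> aM)
       \<and> \<psi> \<in> iso (H2pt act \<mu> \<pi> aM) (H2st act \<mu> \<pi> aM s0 s1)
       \<and> (\<forall>z \<in> Zst. \<phi> (r_coset (add_grp Zst) Bst z) = r_coset (add_grp Zpt) Bpt z)
       \<and> (\<forall>z \<in> Zpt. \<psi> (r_coset (add_grp Zpt) Bpt z) = r_coset (add_grp Zst) Bst (st z))
       \<and> (\<forall>X \<in> carrier (H2st act \<mu> \<pi> aM s0 s1). \<psi> (\<phi> X) = X)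
       \<and> (\<forall>Y \<in> carrier (H2pt act \<mu> \<pi> aM). \<phi> (\<psi> Y) = Y)"
proof (rule exI, rule exI, intro conjI)
  note inverse = iso_inverse[OF H2pt_group std_iso]
  show "(\<lambda>X. st ` X) \<in> iso (H2pt act \<mu> \<pi> aM) (H2st act \<mu> \<pi> aM s0 s1)" by (rule std_iso)
  show "inv_into (carrier (H2pt act \<mu> \<pi> aM)) (\<lambda>X. st ` X)
          \<in> iso (H2st act \<mu> \<pi> aM s0 s1) (H2pt act \<mu> \<pi> aM)" by (rule inverse(1))
  show "\<forall>z \<in> Zst. inv_into (carrier (H2pt act \<mu> \<pi> aM)) (\<lambda>X. st ` X) (r_coset (add_grp Zst) Bst z)
          = r_coset (add_grp Zpt) Bpt z"
    using inclusion_iso_coset by blast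
  show "\<forall>z \<in> Zpt. st ` r_coset (add_grp Zpt) Bpt z = r_coset (add_grp Zst) Bst (st z)"
    using std_iso_coset by blast
  show "\<forall>X \<in> carrier (H2st act \<mu> \<pi> aM s0 s1).
          st ` inv_into (carrier (H2pt act \<mu> \<pi> aM)) (\<lambda>X. st ` X) X = X"
    using inverse(2) by simp
  show "\<forall>Y \<in> carrier (H2pt act \<mu> \<pi> aM).
          inv_into (carrier (H2pt act \<mu> \<pi> aM)) (\<lambda>X. st ` X) (st ` Y) = Y"
    using inverse(3) by simp
qed

lemma H2_iso_H2st: "H2 act \<mu> \<pi> aM \<cong> H2st act \<mu> \<pi> aM s0 s1"
  using iso_trans[OF is_isoI[OF pointify_iso] is_isoI[OF std_iso]] .

end

theorem corollary4p5:
  fixes aP1 :: "'p0::group_add \<Rightarrow> 'p1::ab_group_add \<Rightarrow> 'p1"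
    and act :: "'g::group_add \<Rightarrow> 'n::group_add \<Rightarrow> 'n"
    and \<mu> :: "'n \<Rightarrow> 'g" and \<iota> :: "'p1 \<Rightarrow> 'n" and \<pi> :: "'g \<Rightarrow> 'p0"
    and aM :: "'p0 \<Rightarrow> 'm::ab_group_add \<Rightarrow> 'm"
    and s0 :: "'p0 \<Rightarrow> 'g" and s1 :: "'g \<Rightarrow> 'n"
  assumes E: "crossed_module_ext aP1 act \<mu> \<iota> \<pi>"
    and M: "aut_action aM"
    and S: "section_system \<mu> \<pi> s0 s1"
  shows
    \<comment> \<open>(a)\<close>
    "(\<forall>z \<in> Z2pt act \<mu> \<pi> aM.
        (\<forall>m. cM (std \<mu> \<pi> aM s0 s1 z) (s1 (\<mu> m)) = 0)
      \<and> (\<forall>g. cG (std \<mu> \<pi> aM s0 s1 z) (g - s0 (\<pi> g)) (s0 (\<pi> g)) = 0))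
    \<comment> \<open>(b)\<close>
    \<and> Z2st act \<mu> \<pi> aM s0 s1 =
        {z \<in> Z2pt act \<mu> \<pi> aM. (\<forall>m. cM z (s1 (\<mu> m)) = 0)
                               \<and> (\<forall>g. cG z (g - s0 (\<pi> g)) (s0 (\<pi> g)) = 0)}
    \<and> (\<forall>z \<in> Z2pt act \<mu> \<pi> aM. std \<mu> \<pi> aM s0 s1 z \<in> Z2st act \<mu> \<pi> aM s0 s1)
    \<comment> \<open>(c)\<close>
    \<and> (\<exists>\<phi> \<psi>.
         \<phi> \<in> iso (H2st act \<mu> \<pi> aM s0 s1) (H2pt act \<mu> \<pi> aM)
       \<and> \<psi> \<in> iso (H2pt act \<mu> \<pi> aM) (H2st act \<mu> \<pi> aM s0 s1)
       \<and> (\<forall>z \<in> Z2st act \<mu> \<pi> aM s0 s1.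
            \<phi> (r_coset (add_grp (Z2st act \<mu> \<pi> aM s0 s1)) (B2st \<mu> \<pi> aM s0 s1) z)
              = r_coset (add_grp (Z2pt act \<mu> \<pi> aM)) (B2pt \<mu> \<pi> aM) z)
       \<and> (\<forall>z \<in> Z2pt act \<mu> \<pi> aM.
            \<psi> (r_coset (add_grp (Z2pt act \<mu> \<pi> aM)) (B2pt \<mu> \<pi> aM) z)
              = r_coset (add_grp (Z2st act \<mu> \<pi> aM s0 s1)) (B2st \<mu> \<pi> aM s0 s1)
                  (std \<mu> \<pi> aM s0 s1 z))
       \<and> (\<forall>X \<in> carrier (H2st act \<mu> \<pi> aM s0 s1). \<psi> (\<phi> X) = X)
       \<and> (\<forall>Y \<in> carrier (H2pt act \<mu> \<pi> aM). \<phi> (\<psi> Y) = Y))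
    \<and> H2 act \<mu> \<pi> aM \<cong> H2st act \<mu> \<pi> aM s0 s1"
proof -
  interpret crossed_module_with_sections act \<mu> \<pi> aM s0 s1
    using E M S by unfold_locales (auto simp: crossed_module_ext_def)
  show ?thesis
    using std_M_vanishes std_G_vanishes std_in_Zst
    by (intro conjI Z2st_characterisation H2pt_H2st_inverse_isos H2_iso_H2st) simp_all
qed

end
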